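(* For every probability distribution $G$ on $\Theta$ there exists a deterministic IC and IR mechanism $M^{\rm OPT}=(r^{\rm OPT},q^{\rm OPT},u^{\rm OPT})$ that is optimal for $G$ (i.e. $\mathrm{RS}_\alpha(M^{\rm OPT},G)\ge\mathrm{RS}_\alpha(M,G)$ for every IC and IR mechanism $M$), satisfies DD, and has a quantity floor: $q^{\rm OPT}(\theta)\ge\hat q$ whenever $q^{\rm OPT}(\theta)>0$.
   Context: Setting. Let $\Theta=[\underline\theta,\overline\theta]$ with $0<\underline\theta<\overline\theta$. Let $c>0$ and let $P:\mathbb R_+\to\mathbb R_+$ be continuous and strictly decreasing with $P(\overline q)=0$ for some $\overline q>0$. Put $V(q)=\int_0^q P(z)\,dz$ and $\mathrm{TS}(\theta,q)=V(q)-c-\theta q$ for $q>0$, $\mathrm{TS}(\theta,0)=0$. Assume (A2): $\mathrm{TS}(\overline\theta,P^{-1}(\overline\theta))>0$. A mechanism is a triple $M=(r,q,u)$ of functions $r:\Theta\to[0,1]$, $q:\Theta\to[0,\overline q]$, $u:\Theta\to\mathbb R$ with $q(\theta)=0$ if and only if $r(\theta)=0$. It is IC if $u(\theta)\ge u(\theta')+(\theta'-\theta)q(\theta')r(\theta')$ for all $\theta,\theta'\in\Theta$, and IR if $u(\theta)\ge 0$ for all $\theta$. (Known fact: $M$ is IC iff $\theta\mapsto q(\theta)r(\theta)$ is nonincreasing and $u(\theta)=u(\overline\theta)+\int_\theta^{\overline\theta}q(z)r(z)\,dz$ for all $\theta$; an IC mechanism is IR iff $u(\overline\theta)\ge0$.)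 A mechanism is deterministic if $r(\theta)\in\{0,1\}$ for all $\theta$. Fix $\alpha\in[0,1)$. The regulator's surplus at $\theta$ is $\mathrm{RS}_\alpha(\theta,M)=r(\theta)\,\mathrm{TS}(\theta,q(\theta))-(1-\alpha)u(\theta)$. For a probability distribution (CDF) $G$ on $\Theta$, $\mathrm{RS}_\alpha(M,G)=\int_\Theta \mathrm{RS}_\alpha(\theta,M)\,dG(\theta)$. The quantity floor $\hat q$ is the unique $q>0$ with $V(q)-qP(q)=c$. The efficient quantity is $q_e(\theta)=P^{-1}(\theta)$. A mechanism satisfies downward distortion (DD) if $q(\theta)\le q_e(\theta)$ for all $\theta$, with equality at $\theta=\underline\theta$. *)

theory Defs
  imports "HOL-Analysis.Analysis" "HOL-Probability.Probability"
begin

definition V :: "(real \<Rightarrow> real) \<Rightarrow> real \<Rightarrow> real" where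
  "V P q = integral {0..q} P"

definition TS :: "(real \<Rightarrow> real) \<Rightarrow> real \<Rightarrow> real \<Rightarrow> real \<Rightarrow> real" where
  "TS P c \<theta> q = (if q = 0 then 0 else V P q - c - \<theta> * q)"

definition q_eff :: "(real \<Rightarrow> real) \<Rightarrow> real \<Rightarrow> real" where
  "q_eff P \<theta> = (THE q. 0 \<le> q \<and> P q = \<theta>)"

definition q_hat :: "(real \<Rightarrow> real) \<Rightarrow> real \<Rightarrow> real" where
  "q_hat P c = (THE q. 0 < q \<and> V P q - q * P q = c)"

definition is_mechanism ::
  "real \<Rightarrow> real \<Rightarrow> real \<Rightarrow> (real \<Rightarrow> real) \<Rightarrow> (real \<Rightarrow> real) \<Rightarrow> (real \<Rightarrow> real) \<Rightarrow> bool" where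
  "is_mechanism tlo thi qbar r q u \<longleftrightarrow>
     (\<forall>\<theta>\<in>{tlo..thi}. 0 \<le> r \<theta> \<and> r \<theta> \<le> 1 \<and> 0 \<le> q \<theta> \<and> q \<theta> \<le> qbar
                    \<and> (q \<theta> = 0 \<longleftrightarrow> r \<theta> = 0))"

definition is_IC ::
  "real \<Rightarrow> real \<Rightarrow> (real \<Rightarrow> real) \<Rightarrow> (real \<Rightarrow> real) \<Rightarrow> (real \<Rightarrow> real) \<Rightarrow> bool" where
  "is_IC tlo thi r q u \<longleftrightarrow>
     (\<forall>\<theta>\<in>{tlo..thi}. \<forall>\<theta>'\<in>{tlo..thi}. u \<theta> \<ge> u \<theta>' + (\<theta>' - \<theta>) * q \<theta>' * r \<theta>')"

definition is_IR :: "real \<Rightarrow> real \<Rightarrow> (real \<Rightarrow> real) \<Rightarrow> bool" where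
  "is_IR tlo thi u \<longleftrightarrow> (\<forall>\<theta>\<in>{tlo..thi}. u \<theta> \<ge> 0)"

definition deterministic :: "real \<Rightarrow> real \<Rightarrow> (real \<Rightarrow> real) \<Rightarrow> bool" where
  "deterministic tlo thi r \<longleftrightarrow> (\<forall>\<theta>\<in>{tlo..thi}. r \<theta> = 0 \<or> r \<theta> = 1)"

definition RS ::
  "(real \<Rightarrow> real) \<Rightarrow> real \<Rightarrow> real \<Rightarrow> (real \<Rightarrow> real) \<Rightarrow> (real \<Rightarrow> real) \<Rightarrow> (real \<Rightarrow> real) \<Rightarrow> real \<Rightarrow> real" where
  "RS P c \<alpha> r q u \<theta> = r \<theta> * TS P c \<theta> (q \<theta>) - (1 - \<alpha>) * u \<theta>"

definition RS_exp ::
  "(real \<Rightarrow> real) \<Rightarrow> real \<Rightarrow> real \<Rightarrow> real \<Rightarrow> real \<Rightarrow> real measure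
     \<Rightarrow> (real \<Rightarrow> real) \<Rightarrow> (real \<Rightarrow> real) \<Rightarrow> (real \<Rightarrow> real) \<Rightarrow> real" where
  "RS_exp P c \<alpha> tlo thi G r q u = (\<integral>\<theta>\<in>{tlo..thi}. RS P c \<alpha> r q u \<theta> \<partial>G)"

definition DD :: "(real \<Rightarrow> real) \<Rightarrow> real \<Rightarrow> real \<Rightarrow> (real \<Rightarrow> real) \<Rightarrow> bool" where
  "DD P tlo thi q \<longleftrightarrow> (\<forall>\<theta>\<in>{tlo..thi}. q \<theta> \<le> q_eff P \<theta>) \<and> q tlo = q_eff P tlo"

end

theory Submission
  imports Defs
begin

text \<open>For an IC and IR mechanism with expected quantity schedule \<open>x = q r\<close>, the utility at \<open>\<theta>\<close> is
  at least the information rent, the integral of \<open>x\<close> over \<open>[\<theta>, thi]\<close>, and \<open>r (V q - c)\<close> is at most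
  the concave envelope of \<open>V - c\<close> at \<open>x\<close>. Hence the regulator's surplus is bounded by a relaxed
  surplus depending on \<open>x\<close> alone, with equality for deterministic mechanisms whose utility is the
  rent and whose schedule is floored: nonincreasing, with values \<open>0\<close> or in \<open>[qh, qe \<theta>]\<close>. Capping a
  schedule at \<open>qe\<close> and rounding its values below the quantity floor \<open>qh\<close> to \<open>0\<close> or \<open>qh\<close> in \<open>n\<close>
  staggered ways shows that floored schedules do as well as arbitrary ones, up to \<open>O(1/n)\<close>. Helly's
  selection theorem and dominated convergence give a floored schedule of maximal relaxed value;
  raising it to \<open>qe\<close> at the lowest type keeps it optimal and yields downward distortion.\<close>

section \<open>Helly's selection theorem\<close>

lemma bounded_sequence_convergent_subseq_on_countable:
  fixes f :: "nat \<Rightarrow> 'a \<Rightarrow> real"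
  assumes "countable B" and bdd: "\<And>n x. \<bar>f n x\<bar> \<le> M"
  shows "\<exists>s. strict_mono s \<and> (\<forall>x\<in>B. convergent (\<lambda>n. f (s n) x))"
proof -
  define g where "g n = (\<lambda>i::nat. f n (from_nat_into B i))" for n
  have "compact (Pi\<^sub>E UNIV (\<lambda>_::nat. {-M..M}))"
    using compactin_PiE[of "\<lambda>_. euclidean" UNIV "\<lambda>_. {-M..M}"]
    by (simp add: euclidean_product_topology)
  moreover have "g n \<in> Pi\<^sub>E UNIV (\<lambda>_. {-M..M})" for n
    using bdd by (simp add: g_def PiE_iff abs_le_iff) (metis minus_le_iff)
  ultimately obtain l s where s: "strict_mono s" and lim: "(g \<circ> s) \<longlonglongrightarrow> l"
    using compact_imp_seq_compact[THEN seq_compactE] by metis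
  have "convergent (\<lambda>n. f (s n) x)" if "x \<in> B" for x
  proof -
    obtain i where x: "x = from_nat_into B i"
      using from_nat_into_surj[OF \<open>countable B\<close> \<open>x \<in> B\<close>] by metis
    have "isCont (\<lambda>h. h i) l"
      using continuous_on_eq_continuous_at[of UNIV "\<lambda>h::nat \<Rightarrow> real. h i"] by simp
    then have "(\<lambda>n. g (s n) i) \<longlonglongrightarrow> l i"
      using isCont_tendsto_compose[OF _ lim] by (simp add: comp_def)
    then show ?thesis
      unfolding x g_def convergent_def by blast
  qed
  then show ?thesis using s by blast
qed

lemma mono_sequence_tendsto_at_continuity_point:
  fixes f :: "nat \<Rightarrow> real \<Rightarrow> real"
  assumes mono: "\<And>n. mono (f n)" and cont: "isCont F x"
    and L: "\<And>q. q \<in> \<rat> \<Longrightarrow> (\<lambda>n. f n q) \<longlonglongrightarrow> L q"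
    and L_le_F: "\<And>q y. q \<in> \<rat> \<Longrightarrow> q < y \<Longrightarrow> L q \<le> F y"
    and F_le_L: "\<And>q y. q \<in> \<rat> \<Longrightarrow> y \<le> q \<Longrightarrow> F y \<le> L q"
  shows "(\<lambda>n. f n x) \<longlonglongrightarrow> F x"
proof (rule order_tendstoI)
  fix a assume "a < F x"
  then obtain d where "d > 0" and d: "\<And>y. y \<noteq> x \<Longrightarrow> \<bar>y - x\<bar> < d \<Longrightarrow> a < F y"
    using cont order_tendstoD(1)[of F "F x" "at x" a]
    by (auto simp: isCont_def eventually_at dist_real_def)
  obtain q where q: "q \<in> \<rat>" "x - d < q" "q < x"
    using Rats_dense_in_real[of "x - d" x] \<open>d > 0\<close> by auto
  have "a < L q" using d[of q] F_le_L[of q q] q by auto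
  then have "\<forall>\<^sub>F n in sequentially. a < f n q"
    using order_tendstoD(1)[OF L[OF q(1)]] by blast
  then show "\<forall>\<^sub>F n in sequentially. a < f n x"
    by eventually_elim (meson monoD[OF mono] q(3) less_imp_le order.strict_trans2)
next
  fix a assume "F x < a"
  then obtain d where "d > 0" and d: "\<And>y. y \<noteq> x \<Longrightarrow> \<bar>y - x\<bar> < d \<Longrightarrow> F y < a"
    using cont order_tendstoD(2)[of F "F x" "at x" a]
    by (auto simp: isCont_def eventually_at dist_real_def)
  obtain q where q: "q \<in> \<rat>" "x < q" "q < x + d / 2"
    using Rats_dense_in_real[of x "x + d / 2"] \<open>d > 0\<close> by auto
  have "L q < a" using d[of "x + d / 2"] L_le_F[of q "x + d / 2"] q \<open>d > 0\<close> by auto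
  then have "\<forall>\<^sub>F n in sequentially. f n q < a"
    using order_tendstoD(2)[OF L[OF q(1)]] by blast
  then show "\<forall>\<^sub>F n in sequentially. f n x < a"
    by eventually_elim (meson monoD[OF mono] q(2) less_imp_le order.strict_trans1)
qed

text \<open>Helly's selection theorem for monotone functions that need not be right-continuous: after
  extracting convergence on the rationals, the limits are squeezed at every continuity point of the
  monotone function \<open>F\<close> below, and its countably many jumps are handled by a second extraction.\<close>

lemma mono_bounded_sequence_convergent_subseq:
  fixes f :: "nat \<Rightarrow> real \<Rightarrow> real"
  assumes mono: "\<And>n. mono (f n)" and bdd: "\<And>n x. \<bar>f n x\<bar> \<le> M"
  shows "\<exists>s. strict_mono s \<and> (\<forall>x. convergent (\<lambda>n. f (s n) x))"
proof -
  obtain s1 where s1: "strict_mono s1" and conv_rat: "\<And>q. q \<in> \<rat> \<Longrightarrow> convergent (\<lambda>n. f (s1 n) q)"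
    using bounded_sequence_convergent_subseq_on_countable[of _ f, OF countable_rat bdd] by blast
  define L where "L q = lim (\<lambda>n. f (s1 n) q)" for q
  have L: "(\<lambda>n. f (s1 n) q) \<longlonglongrightarrow> L q" if "q \<in> \<rat>" for q
    using conv_rat[OF that] unfolding L_def by (simp add: convergent_LIMSEQ_iff)
  have L_mono: "L q \<le> L q'" if "q \<in> \<rat>" "q' \<in> \<rat>" "q \<le> q'" for q q'
    using that by (intro LIMSEQ_le[OF L L]) (auto intro: monoD[OF mono])
  have L_le: "L q \<le> M" if "q \<in> \<rat>" for q
    using that bdd by (intro LIMSEQ_le_const2[OF L]) (auto simp: abs_le_iff)
  define F where "F x = Sup (L ` (\<rat> \<inter> {..<x}))" for x
  have ne: "\<rat> \<inter> {..<x} \<noteq> {}" for x :: real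
    using Rats_dense_in_real[of "x - 1" x] by auto
  have bdd_L: "bdd_above (L ` (\<rat> \<inter> {..<x}))" for x :: real
    using L_le by (intro bdd_aboveI[of _ M]) auto
  have L_le_F: "L q \<le> F x" if "q \<in> \<rat>" "q < x" for q x
    unfolding F_def using that bdd_L by (intro cSup_upper) auto
  have F_le_L: "F x \<le> L q" if "q \<in> \<rat>" "x \<le> q" for q x
    unfolding F_def using that ne by (intro cSup_least) (auto intro: L_mono)
  have "mono F"
    unfolding F_def mono_def using ne bdd_L by (intro allI impI cSup_subset_mono) auto
  then have "countable {x. \<not> isCont F x}"
    by (rule mono_ctble_discont)
  then obtain s2 where s2: "strict_mono s2"
    and conv_jump: "\<And>x. \<not> isCont F x \<Longrightarrow> convergent (\<lambda>n. f (s1 (s2 n)) x)"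
    using bounded_sequence_convergent_subseq_on_countable[of _ "\<lambda>n. f (s1 n)", OF _ bdd] by blast
  have "(\<lambda>n. f (s1 n) x) \<longlonglongrightarrow> F x" if "isCont F x" for x
    using mono_sequence_tendsto_at_continuity_point[of "\<lambda>n. f (s1 n)", OF mono that L L_le_F F_le_L] .
  then have "convergent (\<lambda>n. f (s1 (s2 n)) x)" for x
    using conv_jump[of x] LIMSEQ_subseq_LIMSEQ[OF _ s2, of "\<lambda>n. f (s1 n) x"]
    by (cases "isCont F x") (auto simp: convergent_def comp_def)
  then show ?thesis using strict_mono_o[OF s1 s2] by (auto simp: comp_def)
qed

lemma antimono_on_bounded_sequence_convergent_subseq:
  fixes f :: "nat \<Rightarrow> real \<Rightarrow> real"
  assumes anti: "\<And>n. antimono_on {a..b} (f n)" and bdd: "\<And>n x. x \<in> {a..b} \<Longrightarrow> \<bar>f n x\<bar> \<le> M"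
    and "a \<le> b"
  shows "\<exists>s. strict_mono s \<and> (\<forall>x\<in>{a..b}. convergent (\<lambda>n. f (s n) x))"
proof -
  define g where "g n t = - f n (max a (min b t))" for n t
  have "mono (g n)" for n
    using anti[of n] \<open>a \<le> b\<close> unfolding g_def monotone_on_def mono_def by auto
  moreover have "\<bar>g n t\<bar> \<le> M" for n t
    using bdd \<open>a \<le> b\<close> unfolding g_def by auto
  ultimately obtain s where s: "strict_mono s" and conv: "\<And>t. convergent (\<lambda>n. g (s n) t)"
    using mono_bounded_sequence_convergent_subseq by blast
  have "convergent (\<lambda>n. f (s n) x)" if "x \<in> {a..b}" for x
    using conv[of x] that convergent_minus_iff[of "\<lambda>n. f (s n) x"] by (simp add: g_def)
  then show ?thesis using s by blast
qed

section \<open>Antitone functions on intervals\<close>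

lemma antimono_on_integrable:
  fixes f :: "real \<Rightarrow> real"
  assumes "antimono_on {a..b} f"
  shows "f integrable_on {a..b}"
proof -
  have "mono_on {a..b} (\<lambda>t. - f t)"
    using assms by (auto simp: monotone_on_def)
  then have "(\<lambda>t. - (- f t)) integrable_on {a..b}"
    by (intro integrable_neg integrable_on_mono_on)
  then show ?thesis by simp
qed

lemma antimono_on_integral_bounds:
  fixes f :: "real \<Rightarrow> real"
  assumes "antimono_on {a..b} f" and "a \<le> b"
  shows "(b - a) * f b \<le> integral {a..b} f" and "integral {a..b} f \<le> (b - a) * f a"
proof -
  have f: "f integrable_on {a..b}"
    using assms(1) by (rule antimono_on_integrable)
  have "integral {a..b} (\<lambda>_. f b) \<le> integral {a..b} f"
    by (rule integral_le) (use f assms in \<open>auto simp: monotone_on_def\<close>)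
  then show "(b - a) * f b \<le> integral {a..b} f" using assms by simp
  have "integral {a..b} f \<le> integral {a..b} (\<lambda>_. f a)"
    by (rule integral_le) (use f assms in \<open>auto simp: monotone_on_def\<close>)
  then show "integral {a..b} f \<le> (b - a) * f a" using assms by simp
qed

text \<open>Summing the inequalities between neighbouring points of a uniform partition gives a lower
  Riemann sum of \<open>x\<close>, which differs from its integral by at most the mesh times the total drop
  of \<open>x\<close>.\<close>

lemma antimono_on_integral_le_drop:
  fixes x u :: "real \<Rightarrow> real"
  assumes anti: "antimono_on {a..b} x" and "a \<le> b" and "0 < n"
    and step: "\<And>s t. s \<in> {a..b} \<Longrightarrow> t \<in> {a..b} \<Longrightarrow> u t + (t - s) * x t \<le> u s"
  shows "integral {a..b} x - (b - a) / real n * (x a - x b) \<le> u a - u b"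
proof -
  define h where "h = (b - a) / real n"
  define t where "t k = a + real k * h" for k :: nat
  have "0 \<le> h" unfolding h_def using \<open>a \<le> b\<close> by simp
  have t_n: "t n = b" unfolding t_def h_def using \<open>0 < n\<close> by simp
  have t_ab: "t k \<in> {a..b}" if "k \<le> n" for k
  proof -
    have "real k * h \<le> real n * h" "0 \<le> real k * h"
      using that \<open>0 \<le> h\<close> by (auto intro: mult_right_mono)
    then show ?thesis using t_n unfolding t_def by auto
  qed
  have "integral {a..t k} x - h * (x a - x (t k)) \<le> u a - u (t k)" if "k \<le> n" for k
    using that
  proof (induction k)
    case 0
    then show ?case unfolding t_def by simp
  next
    case (Suc k)
    have tk: "t k \<in> {a..b}" "t (Suc k) \<in> {a..b}" "t (Suc k) = t k + h"
      using t_ab[of k] t_ab[of "Suc k"] Suc.prems by (auto simp: t_def algebra_simps)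
    have sub: "antimono_on {t k..t (Suc k)} x"
      using tk by (intro monotone_on_subset[OF anti]) auto
    have "u (t (Suc k)) + h * x (t (Suc k)) \<le> u (t k)"
      using step[OF tk(1,2)] tk(3) by simp
    moreover have "integral {t k..t (Suc k)} x \<le> h * x (t k)"
      using antimono_on_integral_bounds(2)[OF sub] tk \<open>0 \<le> h\<close> by auto
    moreover have "integral {a..t (Suc k)} x = integral {a..t k} x + integral {t k..t (Suc k)} x"
      using Henstock_Kurzweil_Integration.integral_combine[of a "t k" "t (Suc k)" x]
        antimono_on_integrable[OF monotone_on_subset[OF anti]] tk \<open>0 \<le> h\<close> by auto
    ultimately show ?case
      using Suc.IH Suc.prems by (simp add: algebra_simps)
  qed
  from this[of n] show ?thesis
    using t_n unfolding h_def by simp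
qed

lemma antimono_on_borel_measurable:
  fixes f :: "real \<Rightarrow> real"
  assumes "antimono_on A f"
  shows "f \<in> borel_measurable (restrict_space borel A)"
proof -
  have "mono_on A (\<lambda>t. - f t)"
    using assms by (auto simp: monotone_on_def)
  then have "(\<lambda>t. - (- f t)) \<in> borel_measurable (restrict_space borel A)"
    by (intro borel_measurable_uminus borel_measurable_mono_on_fnc)
  then show ?thesis by simp
qed

lemma le_of_le_plus_divide_nat:
  fixes a b C :: real
  assumes "0 \<le> C" and le: "\<And>n::nat. 0 < n \<Longrightarrow> a \<le> b + C / real n"
  shows "a \<le> b"
proof (rule field_le_epsilon)
  fix e :: real assume "0 < e"
  obtain n :: nat where n: "C / e < real n"
    using reals_Archimedean2 by blast
  with \<open>0 \<le> C\<close> \<open>0 < e\<close> have "0 < n"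
    by (cases n) (auto simp: divide_less_0_iff)
  have "C / real n < e"
    using n \<open>0 < e\<close> \<open>0 < n\<close> by (simp add: divide_less_eq mult.commute)
  then show "a \<le> b + e" using le[OF \<open>0 < n\<close>] by linarith
qed

section \<open>Demand, efficient quantities and the quantity floor\<close>

locale demand =
  fixes P :: "real \<Rightarrow> real" and qbar :: real
  assumes qbar_pos: "0 < qbar"
    and P_continuous: "continuous_on {0..} P"
    and P_nonneg: "\<forall>x\<ge>0. 0 \<le> P x"
    and P_antimono: "\<forall>x y. 0 \<le> x \<and> x \<le> y \<longrightarrow> P y \<le> P x"
    and P_strict_antimono: "\<forall>x y. 0 \<le> x \<and> x < y \<and> y \<le> qbar \<longrightarrow> P y < P x"
    and P_qbar: "P qbar = 0"
begin

lemma P_integrable: "0 \<le> a \<Longrightarrow> P integrable_on {a..b}"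
  by (intro integrable_continuous_interval continuous_on_subset[OF P_continuous]) auto

lemma P_vanishes:
  assumes "qbar \<le> s"
  shows "P s = 0"
proof -
  have "P s \<le> P qbar" "0 \<le> P s"
    using P_antimono P_nonneg assms qbar_pos by auto
  then show ?thesis using P_qbar by simp
qed

lemma P_inj:
  assumes "0 \<le> q1" "0 \<le> q2" "P q1 = P q2" "0 < P q1"
  shows "q1 = q2"
proof -
  have "q1 < qbar" "q2 < qbar"
    using P_vanishes[of q1] P_vanishes[of q2] assms by force+
  then show ?thesis
    using P_strict_antimono[rule_format, of q1 q2] P_strict_antimono[rule_format, of q2 q1] assms
    by (cases q1 q2 rule: linorder_cases) auto
qed

lemma V_0: "V P 0 = 0"
  unfolding V_def by simp

lemma V_diff: "0 \<le> a \<Longrightarrow> a \<le> b \<Longrightarrow> V P b - V P a = integral {a..b} P"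
  unfolding V_def
  using Henstock_Kurzweil_Integration.integral_combine[of 0 a b P] P_integrable[of 0 b] by simp

lemma V_diff_bounds:
  assumes "0 \<le> a" "a \<le> b"
  shows "(b - a) * P b \<le> V P b - V P a" and "V P b - V P a \<le> (b - a) * P a"
proof -
  have "antimono_on {a..b} P"
    using P_antimono assms by (auto simp: monotone_on_def)
  then show "(b - a) * P b \<le> V P b - V P a" and "V P b - V P a \<le> (b - a) * P a"
    using antimono_on_integral_bounds[of a b P] V_diff assms by auto
qed

lemma V_mono:
  assumes "0 \<le> a" "a \<le> b"
  shows "V P a \<le> V P b"
proof -
  have "0 \<le> (b - a) * P b"
    using P_nonneg assms by simp
  then show ?thesis using V_diff_bounds(1)[OF assms] by linarith
qed

lemma V_below_tangent:
  assumes "0 \<le> s" "0 \<le> e"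
  shows "V P s \<le> V P e + (s - e) * P e"
proof (cases "e \<le> s")
  case True
  then show ?thesis using V_diff_bounds(2)[of e s] assms by simp
next
  case False
  then show ?thesis using V_diff_bounds(1)[of s e] assms by (simp add: algebra_simps)
qed

lemma V_continuous_on: "continuous_on {0..b} (V P)"
  unfolding V_def by (rule indefinite_integral_continuous_1) (rule P_integrable, simp)

lemma V_isCont:
  assumes "0 < s"
  shows "isCont (V P) s"
proof -
  have "continuous_on {0<..<s + 1} (V P)"
    by (rule continuous_on_subset[OF V_continuous_on[of "s + 1"]]) auto
  then show ?thesis
    using assms by (simp add: continuous_on_eq_continuous_at)
qed

lemma q_eff:
  assumes "0 < \<theta>" "\<theta> \<le> P 0"
  shows "0 \<le> q_eff P \<theta>" "P (q_eff P \<theta>) = \<theta>" "q_eff P \<theta> < qbar"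
proof -
  obtain q where q: "0 \<le> q" "q \<le> qbar" "P q = \<theta>"
    using IVT2'[of P qbar \<theta> 0] P_qbar assms qbar_pos continuous_on_subset[OF P_continuous, of "{0..qbar}"]
    by auto
  have "q_eff P \<theta> = q"
    unfolding q_eff_def using q assms P_inj by (intro the_equality) auto
  then show "0 \<le> q_eff P \<theta>" "P (q_eff P \<theta>) = \<theta>" "q_eff P \<theta> < qbar"
    using q P_vanishes[of q] assms by (auto simp: order.order_iff_strict)
qed

lemma q_eff_antimono:
  assumes "0 < a" "a \<le> b" "b \<le> P 0"
  shows "q_eff P b \<le> q_eff P a"
proof (rule ccontr)
  assume "\<not> ?thesis"
  then have "P (q_eff P b) < P (q_eff P a)"
    using P_strict_antimono[rule_format, of "q_eff P a" "q_eff P b"] q_eff[of a] q_eff[of b] assms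
    by auto
  then show False using q_eff[of a] q_eff[of b] assms by auto
qed

definition consumer_surplus :: "real \<Rightarrow> real" where
  "consumer_surplus q = V P q - q * P q"

lemma consumer_surplus_mono:
  assumes "0 \<le> a" "a \<le> b"
  shows "consumer_surplus a \<le> consumer_surplus b"
proof -
  have "a * P b \<le> a * P a"
    using assms P_antimono by (intro mult_left_mono) auto
  moreover have "(b - a) * P b = b * P b - a * P b"
    by (simp add: algebra_simps)
  ultimately show ?thesis
    using V_diff_bounds(1)[OF assms] unfolding consumer_surplus_def by linarith
qed

lemma consumer_surplus_strict_mono:
  assumes "0 < a" "a < b" "a < qbar"
  shows "consumer_surplus a < consumer_surplus b"
proof -
  have "P b < P a"
  proof (cases "b \<le> qbar")
    case True
    then show ?thesis using P_strict_antimono[rule_format, of a b] assms by simp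
  next
    case False
    then show ?thesis
      using P_vanishes[of b] P_strict_antimono[rule_format, of a qbar] P_qbar assms by simp
  qed
  then have "a * P b < a * P a"
    using assms by simp
  moreover have "(b - a) * P b = b * P b - a * P b"
    by (simp add: algebra_simps)
  ultimately show ?thesis
    using V_diff_bounds(1)[of a b] assms unfolding consumer_surplus_def by linarith
qed

lemma consumer_surplus_continuous_on: "continuous_on {0..b} consumer_surplus"
  unfolding consumer_surplus_def
  by (intro continuous_intros V_continuous_on continuous_on_subset[OF P_continuous]) auto

lemma q_hat:
  assumes "0 < c" "0 \<le> q" "q < qbar" "c < consumer_surplus q"
  shows "0 < q_hat P c" "consumer_surplus (q_hat P c) = c" "q_hat P c < q"
proof -
  have cs0: "consumer_surplus 0 = 0"
    unfolding consumer_surplus_def V_0 by simp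
  then obtain r where r: "0 \<le> r" "r \<le> q" "consumer_surplus r = c"
    using IVT'[of consumer_surplus 0 c q] consumer_surplus_continuous_on[of q] assms by auto
  have "0 < r" using cs0 r \<open>0 < c\<close> by (cases "r = 0") auto
  have "r < q"
    using r assms by (auto simp: order.order_iff_strict)
  have unique: "r' = r" if "0 < r'" "consumer_surplus r' = c" for r'
  proof (cases r' r rule: linorder_cases)
    case less
    then show ?thesis using consumer_surplus_strict_mono[of r' r] that r \<open>r < q\<close> assms by simp
  next
    case greater
    then show ?thesis using consumer_surplus_strict_mono[of r r'] that r \<open>0 < r\<close> \<open>r < q\<close> assms by simp
  qed
  have "q_hat P c = r"
    unfolding q_hat_def
  proof (rule the_equality)
    show "0 < r \<and> V P r - r * P r = c" using r \<open>0 < r\<close> by (simp add: consumer_surplus_def)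
    show "x = r" if "0 < x \<and> V P x - x * P x = c" for x
      using unique[of x] that by (simp add: consumer_surplus_def)
  qed
  then show "0 < q_hat P c" "consumer_surplus (q_hat P c) = c" "q_hat P c < q"
    using r \<open>0 < r\<close> \<open>r < q\<close> by auto
qed

end

locale regulation = demand +
  fixes c \<alpha> tlo thi :: real and G :: "real measure"
  assumes tlo_pos: "0 < tlo" and tlo_less_thi: "tlo < thi" and c_pos: "0 < c"
    and surplus_at_thi: "\<exists>q\<ge>0. P q = thi \<and> TS P c thi q > 0"
    and alpha_nonneg: "0 \<le> \<alpha>" and alpha_less_1: "\<alpha> < 1"
    and prob_space_G: "prob_space G" and sets_G: "sets G = sets borel"
    and measure_G_Th: "measure G {tlo..thi} = 1"
begin

abbreviation Th :: "real set" where "Th \<equiv> {tlo..thi}"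
abbreviation qe :: "real \<Rightarrow> real" where "qe \<equiv> q_eff P"
abbreviation qh :: real where "qh \<equiv> q_hat P c"

lemma thi_le_P0: "thi \<le> P 0"
proof -
  obtain q where "0 \<le> q" "P q = thi"
    using surplus_at_thi by blast
  then show ?thesis using P_antimono[rule_format, of 0 q] by simp
qed

lemma q_eff_Th:
  assumes "\<theta> \<in> Th"
  shows "0 \<le> qe \<theta>" "P (qe \<theta>) = \<theta>" "qe \<theta> < qbar" "qe thi \<le> qe \<theta>" "qe \<theta> \<le> qe tlo"
proof -
  have "0 < \<theta>" "\<theta> \<le> P 0"
    using assms tlo_pos thi_le_P0 by auto
  then show "0 \<le> qe \<theta>" "P (qe \<theta>) = \<theta>" "qe \<theta> < qbar"
    by (rule q_eff)+
  show "qe thi \<le> qe \<theta>" "qe \<theta> \<le> qe tlo"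
    using q_eff_antimono[of \<theta> thi] q_eff_antimono[of tlo \<theta>] assms tlo_pos thi_le_P0 by auto
qed

lemma antimono_on_q_eff: "antimono_on Th qe"
  unfolding monotone_on_def
  using q_eff_antimono tlo_pos thi_le_P0 by (meson atLeastAtMost_iff order.strict_trans2 order.trans)

lemma surplus_q_eff_thi: "0 < qe thi" "0 < V P (qe thi) - c - thi * qe thi"
proof -
  obtain q where q: "0 \<le> q" "P q = thi" "0 < TS P c thi q"
    using surplus_at_thi by auto
  have "0 < thi" using tlo_pos tlo_less_thi by simp
  then have "qe thi = q"
    using P_inj[of "qe thi" q] q_eff[of thi] q thi_le_P0 by simp
  moreover have "q \<noteq> 0"
    using q unfolding TS_def by auto
  ultimately show "0 < qe thi" "0 < V P (qe thi) - c - thi * qe thi"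
    using q unfolding TS_def by auto
qed

lemma surplus_q_eff_pos:
  assumes "\<theta> \<in> Th"
  shows "0 < V P (qe \<theta>) - c - \<theta> * qe \<theta>"
proof -
  have "V P (qe thi) \<le> V P (qe \<theta>) + (qe thi - qe \<theta>) * \<theta>"
    using V_below_tangent[of "qe thi" "qe \<theta>"] q_eff_Th[OF assms] surplus_q_eff_thi by simp
  moreover have "\<theta> * qe thi \<le> thi * qe thi"
    using assms surplus_q_eff_thi by (intro mult_right_mono) auto
  moreover have "(qe thi - qe \<theta>) * \<theta> = \<theta> * qe thi - \<theta> * qe \<theta>"
    by (simp add: algebra_simps)
  ultimately show ?thesis
    using surplus_q_eff_thi by linarith
qed

lemma quantity_floor: "0 < qh" "consumer_surplus qh = c" "qh < qe thi"
proof -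
  have "c < consumer_surplus (qe thi)"
    using surplus_q_eff_thi q_eff_Th[of thi] tlo_less_thi unfolding consumer_surplus_def
    by (auto simp: algebra_simps)
  then show "0 < qh" "consumer_surplus qh = c" "qh < qe thi"
    using q_hat[of c "qe thi"] c_pos q_eff_Th[of thi] tlo_less_thi by auto
qed

lemma quantity_floor_less_q_eff: "\<theta> \<in> Th \<Longrightarrow> qh < qe \<theta>"
  using quantity_floor(3) q_eff_Th(4) by fastforce

text \<open>The concave envelope of \<open>s \<mapsto> V s - c\<close> (taking the value 0 at 0): the ray from the origin
  that touches \<open>V - c\<close> at the quantity floor, where its slope \<open>P qh\<close> is the derivative of \<open>V\<close>,
  followed by \<open>V - c\<close> itself.\<close>

definition envelope :: "real \<Rightarrow> real" where
  "envelope s = (if s < qh then s * P qh else V P s - c)"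

lemma V_floor: "V P qh - c = qh * P qh"
  using quantity_floor(2) unfolding consumer_surplus_def by simp

lemma envelope_below_floor: "s \<le> qh \<Longrightarrow> envelope s = s * P qh"
  unfolding envelope_def using V_floor by auto

lemma envelope_above_floor: "qh \<le> s \<Longrightarrow> envelope s = V P s - c"
  unfolding envelope_def by auto

lemma envelope_0: "envelope 0 = 0"
  using envelope_below_floor quantity_floor(1) by simp

lemma mono_envelope: "mono envelope"
proof (rule monoI)
  fix a b :: real assume "a \<le> b"
  have "0 \<le> P qh" using P_nonneg quantity_floor(1) by simp
  consider "b \<le> qh" | "a \<le> qh" "qh \<le> b" | "qh \<le> a" by linarith
  then show "envelope a \<le> envelope b"
  proof cases
    case 1
    then show ?thesis
      using \<open>a \<le> b\<close> \<open>0 \<le> P qh\<close> envelope_below_floor[of a] envelope_below_floor[of b] mult_right_mono by simp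
  next
    case 2
    then have "envelope a \<le> envelope qh"
      using \<open>0 \<le> P qh\<close> envelope_below_floor[of a] envelope_below_floor[of qh] mult_right_mono by simp
    also have "\<dots> \<le> envelope b"
      using 2 V_mono[of qh b] quantity_floor(1) envelope_above_floor by simp
    finally show ?thesis .
  next
    case 3
    then show ?thesis
      using \<open>a \<le> b\<close> V_mono[of a b] quantity_floor(1) envelope_above_floor by simp
  qed
qed

lemma envelope_bounds: "0 \<le> s \<Longrightarrow> s \<le> qbar \<Longrightarrow> 0 \<le> envelope s \<and> envelope s \<le> envelope qbar"
  using monoD[OF mono_envelope, of 0 s] monoD[OF mono_envelope, of s qbar] envelope_0 by simp

lemma isCont_envelope: "isCont envelope t"
proof -
  have envelope_eq: "envelope = (\<lambda>s. if s \<le> qh then s * P qh else V P s - c)"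
    using envelope_below_floor envelope_above_floor by (auto simp: fun_eq_iff)
  have "continuous_on {s \<in> UNIV. qh \<le> s} (\<lambda>s. V P s - c)"
    using V_isCont quantity_floor(1)
    by (intro continuous_on_diff continuous_at_imp_continuous_on continuous_on_const) auto
  then have "continuous_on UNIV envelope"
    unfolding envelope_eq
    by (intro continuous_on_cases_le[where h="\<lambda>s. s"]) (auto intro!: continuous_intros simp: V_floor)
  then show ?thesis
    by (simp add: continuous_on_eq_continuous_at)
qed

lemma envelope_perspective:
  assumes r: "0 < r" "r \<le> 1" and q: "0 < q"
  shows "r * (V P q - c) \<le> envelope (q * r)"
proof (cases "qh \<le> q * r")
  case True
  define x where "x = q * r"
  have x: "0 < x" "x \<le> q" "qh \<le> x"
    using r q True unfolding x_def by (auto simp: mult_le_cancel_left1)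
  have "r * (V P q - V P x) \<le> r * ((q - x) * P x)"
    using V_diff_bounds(2)[of x q] x r by (intro mult_left_mono) auto
  moreover have "r * ((q - x) * P x) = x * P x - r * (x * P x)"
    unfolding x_def by (simp add: algebra_simps)
  moreover have "(1 - r) * c \<le> (1 - r) * (V P x - x * P x)"
    using consumer_surplus_mono[of qh x] quantity_floor x r unfolding consumer_surplus_def
    by (intro mult_left_mono) auto
  moreover have "(1 - r) * (V P x - x * P x) = V P x - x * P x - r * V P x + r * (x * P x)"
    by (simp add: algebra_simps)
  moreover have "r * (V P q - V P x) = r * V P q - r * V P x" "(1 - r) * c = c - r * c"
    "r * (V P q - c) = r * V P q - r * c"
    by (simp_all add: algebra_simps)
  ultimately have "r * (V P q - c) \<le> V P x - c"
    by linarith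
  then show ?thesis using envelope_above_floor x unfolding x_def by simp
next
  case False
  have "V P q \<le> V P qh + (q - qh) * P qh"
    using V_below_tangent[of q qh] q quantity_floor(1) by simp
  then have "V P q - c \<le> q * P qh"
    using V_floor by (simp add: algebra_simps)
  then have "r * (V P q - c) \<le> r * (q * P qh)"
    using r by (intro mult_left_mono) auto
  then show ?thesis
    using envelope_below_floor[of "q * r"] False by (simp add: algebra_simps)
qed

lemma envelope_net_le_q_eff:
  assumes "\<theta> \<in> Th" "0 \<le> s"
  shows "envelope s - \<theta> * s \<le> envelope (qe \<theta>) - \<theta> * qe \<theta>"
proof -
  have e: "0 \<le> qe \<theta>" "P (qe \<theta>) = \<theta>" "qh < qe \<theta>"
    using q_eff_Th[OF assms(1)] quantity_floor_less_q_eff[OF assms(1)] by auto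
  have e_hull: "envelope (qe \<theta>) = V P (qe \<theta>) - c"
    using envelope_above_floor e by simp
  have above: "envelope t - \<theta> * t \<le> envelope (qe \<theta>) - \<theta> * qe \<theta>" if "qh \<le> t" for t
    using V_below_tangent[of t "qe \<theta>"] e e_hull envelope_above_floor[OF that] that quantity_floor(1)
    by (simp add: algebra_simps)
  show ?thesis
  proof (cases "qh \<le> s")
    case False
    have linear: "envelope t - \<theta> * t = t * (P qh - \<theta>)" if "t \<le> qh" for t
      using envelope_below_floor[OF that] by (simp add: algebra_simps)
    show ?thesis
    proof (cases "\<theta> \<le> P qh")
      case True
      then have "s * (P qh - \<theta>) \<le> qh * (P qh - \<theta>)"
        using False by (intro mult_right_mono) auto
      then show ?thesis using linear[of s] linear[of qh] above[of qh] False by simp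
    next
      case False
      then have "s * (P qh - \<theta>) \<le> 0"
        using assms by (intro mult_nonneg_nonpos) auto
      then show ?thesis
        using linear[of s] \<open>\<not> qh \<le> s\<close> surplus_q_eff_pos[OF assms(1)] e_hull by simp
    qed
  qed (rule above)
qed

section \<open>The relaxed problem\<close>

definition schedule :: "(real \<Rightarrow> real) \<Rightarrow> bool" where
  "schedule x \<longleftrightarrow> antimono_on Th x \<and> (\<forall>\<theta>\<in>Th. 0 \<le> x \<theta> \<and> x \<theta> \<le> qbar)"

definition floored_schedule :: "(real \<Rightarrow> real) \<Rightarrow> bool" where
  "floored_schedule x \<longleftrightarrow> antimono_on Th x \<and> (\<forall>\<theta>\<in>Th. x \<theta> = 0 \<or> qh \<le> x \<theta> \<and> x \<theta> \<le> qe \<theta>)"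

definition rent :: "(real \<Rightarrow> real) \<Rightarrow> real \<Rightarrow> real" where
  "rent x \<theta> = integral {\<theta>..thi} x"

definition relaxed_surplus :: "(real \<Rightarrow> real) \<Rightarrow> real \<Rightarrow> real" where
  "relaxed_surplus x \<theta> = envelope (x \<theta>) - \<theta> * x \<theta> - (1 - \<alpha>) * rent x \<theta>"

abbreviation G_Th :: "real measure" where "G_Th \<equiv> restrict_space G Th"

definition relaxed_value :: "(real \<Rightarrow> real) \<Rightarrow> real" where
  "relaxed_value x = (\<integral>\<theta>. relaxed_surplus x \<theta> \<partial>G_Th)"

lemma floored_imp_schedule:
  assumes "floored_schedule x"
  shows "schedule x"
proof -
  have "0 \<le> x \<theta> \<and> x \<theta> \<le> qbar" if "\<theta> \<in> Th" for \<theta>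
  proof -
    have "x \<theta> = 0 \<or> qh \<le> x \<theta> \<and> x \<theta> \<le> qe \<theta>"
      using assms that unfolding floored_schedule_def by blast
    then show ?thesis using quantity_floor(1) q_eff_Th(3)[OF that] qbar_pos by auto
  qed
  then show ?thesis using assms unfolding floored_schedule_def schedule_def by blast
qed

lemma floored_schedule_le_q_eff:
  assumes "floored_schedule x" "\<theta> \<in> Th"
  shows "x \<theta> \<le> qe \<theta>"
proof -
  have "x \<theta> = 0 \<or> qh \<le> x \<theta> \<and> x \<theta> \<le> qe \<theta>"
    using assms unfolding floored_schedule_def by blast
  then show ?thesis using q_eff_Th(1)[OF assms(2)] by auto
qed

lemma antimono_on_subinterval:
  "antimono_on Th x \<Longrightarrow> tlo \<le> a \<Longrightarrow> b \<le> thi \<Longrightarrow> antimono_on {a..b} x"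
  by (rule monotone_on_subset) auto

lemma rent_split:
  assumes "antimono_on Th x" "tlo \<le> a" "a \<le> b" "b \<le> thi"
  shows "rent x a = integral {a..b} x + rent x b"
  unfolding rent_def
  using Henstock_Kurzweil_Integration.integral_combine[of a b thi x] assms
    antimono_on_integrable[OF antimono_on_subinterval[of x a thi]] by simp

lemma rent_bounds:
  assumes "schedule x" "\<theta> \<in> Th"
  shows "0 \<le> rent x \<theta>" "rent x \<theta> \<le> (thi - tlo) * qbar"
proof -
  have x: "antimono_on {\<theta>..thi} x" "\<And>t. t \<in> {\<theta>..thi} \<Longrightarrow> 0 \<le> x t \<and> x t \<le> qbar"
    using assms antimono_on_subinterval[of x \<theta> thi] unfolding schedule_def by auto
  have "(thi - \<theta>) * x thi \<le> rent x \<theta>" "rent x \<theta> \<le> (thi - \<theta>) * x \<theta>"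
    using antimono_on_integral_bounds[OF x(1)] assms(2) unfolding rent_def by auto
  moreover have "(thi - \<theta>) * x \<theta> \<le> (thi - tlo) * qbar"
    using x(2)[of \<theta>] assms(2) by (intro mult_mono) auto
  ultimately show "0 \<le> rent x \<theta>" "rent x \<theta> \<le> (thi - tlo) * qbar"
    using x(2)[of thi] assms(2) by (auto intro: order.trans[rotated])
qed

lemma antimono_on_rent:
  assumes "schedule x"
  shows "antimono_on Th (rent x)"
proof (rule monotone_onI)
  fix a b assume "a \<in> Th" "b \<in> Th" "a \<le> b"
  moreover have x: "antimono_on Th x" "\<forall>\<theta>\<in>Th. 0 \<le> x \<theta> \<and> x \<theta> \<le> qbar"
    using assms unfolding schedule_def by auto
  ultimately have "rent x a = integral {a..b} x + rent x b"
    "(b - a) * x b \<le> integral {a..b} x" "0 \<le> (b - a) * x b"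
    using rent_split[OF x(1)] antimono_on_integral_bounds(1)[OF antimono_on_subinterval[OF x(1)]]
    by auto
  then show "rent x b \<le> rent x a" by linarith
qed

lemma relaxed_surplus_bounded:
  obtains K where "\<And>x \<theta>. schedule x \<Longrightarrow> \<theta> \<in> Th \<Longrightarrow> \<bar>relaxed_surplus x \<theta>\<bar> \<le> K"
proof
  fix x \<theta> assume x: "schedule x" and \<theta>: "\<theta> \<in> Th"
  have "0 \<le> x \<theta>" "x \<theta> \<le> qbar"
    using x \<theta> unfolding schedule_def by auto
  then have "0 \<le> envelope (x \<theta>)" "envelope (x \<theta>) \<le> envelope qbar"
    "0 \<le> \<theta> * x \<theta>" "\<theta> * x \<theta> \<le> thi * qbar"
    using envelope_bounds \<theta> tlo_pos by (auto intro: mult_mono)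
  moreover have "0 \<le> (1 - \<alpha>) * rent x \<theta>" "(1 - \<alpha>) * rent x \<theta> \<le> rent x \<theta>"
    using rent_bounds[OF x \<theta>] alpha_nonneg alpha_less_1 mult_right_mono[of "1 - \<alpha>" 1 "rent x \<theta>"]
    by auto
  ultimately show "\<bar>relaxed_surplus x \<theta>\<bar> \<le> envelope qbar + thi * qbar + (thi - tlo) * qbar"
    using rent_bounds[OF x \<theta>] unfolding relaxed_surplus_def by linarith
qed

lemma relaxed_surplus_measurable:
  assumes "schedule x"
  shows "relaxed_surplus x \<in> borel_measurable (restrict_space borel Th)"
proof -
  have x: "x \<in> borel_measurable (restrict_space borel Th)"
    using assms antimono_on_borel_measurable unfolding schedule_def by blast
  have "rent x \<in> borel_measurable (restrict_space borel Th)"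
    using antimono_on_rent[OF assms] by (rule antimono_on_borel_measurable)
  moreover have "(\<lambda>\<theta>. envelope (x \<theta>)) \<in> borel_measurable (restrict_space borel Th)"
    using measurable_compose[OF x borel_measurable_mono[OF mono_envelope]] .
  moreover have "(\<lambda>\<theta>. \<theta>) \<in> borel_measurable (restrict_space borel Th)"
    by (rule measurable_restrict_space1) simp
  ultimately show ?thesis
    unfolding relaxed_surplus_def[abs_def] using x
    by (intro borel_measurable_diff borel_measurable_times borel_measurable_const)
qed

lemma prob_space_G_Th: "prob_space G_Th"
proof (rule prob_space_restrict_space)
  show "Th \<in> sets G" using sets_G by simp
  interpret prob_space G by (rule prob_space_G)
  show "emeasure G Th = 1"
    using emeasure_eq_measure measure_G_Th by simp
qed

lemma set_integral_G_Th:
  fixes f :: "real \<Rightarrow> real"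
  shows "set_integrable G Th f \<longleftrightarrow> integrable G_Th f"
  "set_lebesgue_integral G Th f = integral\<^sup>L G_Th f"
  unfolding set_integrable_def set_lebesgue_integral_def
  using integrable_restrict_space[of Th G f] integral_restrict_space[of Th G f] sets_G
  by simp_all

lemma measurable_G_Th:
  "f \<in> borel_measurable (restrict_space borel Th) \<Longrightarrow> f \<in> borel_measurable G_Th"
  by (metis measurable_cong_sets sets_restrict_space_cong sets_G)

lemma integrable_G_Th:
  fixes f :: "real \<Rightarrow> real"
  assumes "f \<in> borel_measurable (restrict_space borel Th)" "\<And>\<theta>. \<theta> \<in> Th \<Longrightarrow> \<bar>f \<theta>\<bar> \<le> K"
  shows "integrable G_Th f"
proof -
  interpret prob_space G_Th by (rule prob_space_G_Th)
  show ?thesis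
  proof (rule integrable_const_bound)
    show "AE \<theta> in G_Th. norm (f \<theta>) \<le> K"
      using assms(2) sets_G by (auto simp: space_restrict_space)
  qed (rule measurable_G_Th[OF assms(1)])
qed

lemma integrable_relaxed_surplus:
  assumes "schedule x"
  shows "integrable G_Th (relaxed_surplus x)"
proof -
  obtain K where "\<And>x \<theta>. schedule x \<Longrightarrow> \<theta> \<in> Th \<Longrightarrow> \<bar>relaxed_surplus x \<theta>\<bar> \<le> K"
    using relaxed_surplus_bounded by blast
  then show ?thesis
    using integrable_G_Th[OF relaxed_surplus_measurable[OF assms]] assms by blast
qed

lemma relaxed_value_mono:
  assumes "schedule x" "schedule y" "\<And>\<theta>. \<theta> \<in> Th \<Longrightarrow> relaxed_surplus x \<theta> \<le> relaxed_surplus y \<theta>"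
  shows "relaxed_value x \<le> relaxed_value y"
  unfolding relaxed_value_def
  using assms integrable_relaxed_surplus sets_G by (intro integral_mono) (auto simp: space_restrict_space)

lemma relaxed_value_bounded: obtains B where "\<And>x. schedule x \<Longrightarrow> relaxed_value x \<le> B"
proof -
  interpret prob_space G_Th by (rule prob_space_G_Th)
  obtain K where K: "\<And>x \<theta>. schedule x \<Longrightarrow> \<theta> \<in> Th \<Longrightarrow> \<bar>relaxed_surplus x \<theta>\<bar> \<le> K"
    using relaxed_surplus_bounded by blast
  have "relaxed_value x \<le> K" if "schedule x" for x
  proof -
    have "relaxed_value x \<le> (\<integral>\<theta>. K \<partial>G_Th)"
      unfolding relaxed_value_def
      using integrable_relaxed_surplus[OF that] K[OF that] sets_G
      by (intro integral_mono) (auto simp: space_restrict_space abs_le_iff)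
    then show ?thesis using prob_space by simp
  qed
  then show ?thesis using that by blast
qed

lemma IC_schedule:
  assumes mech: "is_mechanism tlo thi qbar r q u" and ic: "is_IC tlo thi r q u"
  shows "schedule (\<lambda>\<theta>. q \<theta> * r \<theta>)"
proof -
  have "q b * r b \<le> q a * r a" if "a \<in> Th" "b \<in> Th" "a < b" for a b
  proof -
    have "u a \<ge> u b + (b - a) * q b * r b" "u b \<ge> u a + (a - b) * q a * r a"
      using ic that unfolding is_IC_def by auto
    then have "(b - a) * (q b * r b - q a * r a) \<le> 0"
      by (simp add: algebra_simps)
    then show ?thesis
      using \<open>a < b\<close> by (simp add: mult_le_0_iff)
  qed
  then have "antimono_on Th (\<lambda>\<theta>. q \<theta> * r \<theta>)"
    by (intro monotone_onI) (auto simp: order.order_iff_strict)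
  moreover have "0 \<le> q \<theta> * r \<theta> \<and> q \<theta> * r \<theta> \<le> qbar" if "\<theta> \<in> Th" for \<theta>
  proof -
    have "0 \<le> r \<theta>" "r \<theta> \<le> 1" "0 \<le> q \<theta>" "q \<theta> \<le> qbar"
      using mech that unfolding is_mechanism_def by auto
    then show ?thesis using mult_mono[of "q \<theta>" qbar "r \<theta>" 1] by simp
  qed
  ultimately show ?thesis unfolding schedule_def by blast
qed

lemma rent_le_utility:
  assumes mech: "is_mechanism tlo thi qbar r q u" and ic: "is_IC tlo thi r q u"
    and ir: "is_IR tlo thi u" and \<theta>: "\<theta> \<in> Th"
  shows "rent (\<lambda>t. q t * r t) \<theta> \<le> u \<theta>"
proof (rule le_of_le_plus_divide_nat)
  define x where "x t = q t * r t" for t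
  have x: "schedule x"
    unfolding x_def by (rule IC_schedule[OF mech ic])
  then have anti: "antimono_on {\<theta>..thi} x" and bounds: "\<And>t. t \<in> Th \<Longrightarrow> 0 \<le> x t \<and> x t \<le> qbar"
    using \<theta> antimono_on_subinterval unfolding schedule_def by auto
  have step: "u t + (t - s) * x t \<le> u s" if "s \<in> {\<theta>..thi}" "t \<in> {\<theta>..thi}" for s t
    using ic that \<theta> unfolding is_IC_def x_def by (auto simp: mult.assoc)
  show "0 \<le> (thi - \<theta>) * qbar" using \<theta> qbar_pos by simp
  fix n :: nat assume "0 < n"
  have "rent x \<theta> - (thi - \<theta>) / real n * (x \<theta> - x thi) \<le> u \<theta> - u thi"
    using antimono_on_integral_le_drop[OF anti _ \<open>0 < n\<close> step] \<theta> unfolding rent_def by simp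
  moreover have "(thi - \<theta>) / real n * (x \<theta> - x thi) \<le> (thi - \<theta>) / real n * qbar"
    using bounds[OF \<theta>] bounds[of thi] tlo_less_thi \<theta> by (intro mult_left_mono) auto
  moreover have "0 \<le> u thi"
    using ir tlo_less_thi unfolding is_IR_def by simp
  ultimately show "rent (\<lambda>t. q t * r t) \<theta> \<le> u \<theta> + (thi - \<theta>) * qbar / real n"
    unfolding x_def by simp
qed

lemma RS_le_relaxed_surplus:
  assumes mech: "is_mechanism tlo thi qbar r q u" and ic: "is_IC tlo thi r q u"
    and ir: "is_IR tlo thi u" and \<theta>: "\<theta> \<in> Th"
  shows "RS P c \<alpha> r q u \<theta> \<le> relaxed_surplus (\<lambda>t. q t * r t) \<theta>"
proof -
  have rent: "(1 - \<alpha>) * rent (\<lambda>t. q t * r t) \<theta> \<le> (1 - \<alpha>) * u \<theta>"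
    using rent_le_utility[OF assms] alpha_less_1 by (intro mult_left_mono) auto
  have m: "0 \<le> r \<theta>" "r \<theta> \<le> 1" "0 \<le> q \<theta>" "q \<theta> = 0 \<longleftrightarrow> r \<theta> = 0"
    using mech \<theta> unfolding is_mechanism_def by auto
  show ?thesis
  proof (cases "r \<theta> = 0")
    case True
    then show ?thesis using rent unfolding RS_def relaxed_surplus_def by (simp add: envelope_0)
  next
    case False
    then have "0 < r \<theta>" "0 < q \<theta>" using m by auto
    then have "r \<theta> * TS P c \<theta> (q \<theta>) \<le> envelope (q \<theta> * r \<theta>) - \<theta> * (q \<theta> * r \<theta>)"
      using envelope_perspective[of "r \<theta>" "q \<theta>"] m(2) unfolding TS_def by (simp add: algebra_simps)
    then show ?thesis using rent unfolding RS_def relaxed_surplus_def by simp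
  qed
qed

section \<open>Floored schedules suffice\<close>

lemma capped_schedule:
  assumes x: "schedule x"
  defines "z \<equiv> \<lambda>\<theta>. min (x \<theta>) (qe \<theta>)"
  shows "schedule z" and "\<And>\<theta>. \<theta> \<in> Th \<Longrightarrow> relaxed_surplus x \<theta> \<le> relaxed_surplus z \<theta>"
proof -
  have "antimono_on Th z"
    using x antimono_on_q_eff unfolding schedule_def z_def monotone_on_def
    by (meson min.mono)
  then show z: "schedule z"
    using x q_eff_Th(1) unfolding schedule_def z_def by auto
  fix \<theta> assume \<theta>: "\<theta> \<in> Th"
  have "envelope (x \<theta>) - \<theta> * x \<theta> \<le> envelope (z \<theta>) - \<theta> * z \<theta>"
    using envelope_net_le_q_eff[OF \<theta>, of "x \<theta>"] x \<theta> unfolding z_def schedule_def by (auto simp: min_def)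
  moreover have "rent z \<theta> \<le> rent x \<theta>"
    unfolding rent_def
    using antimono_on_integrable[OF antimono_on_subinterval] x z \<theta>
    by (intro integral_le) (auto simp: schedule_def z_def)
  then have "(1 - \<alpha>) * rent z \<theta> \<le> (1 - \<alpha>) * rent x \<theta>"
    using alpha_less_1 by (intro mult_left_mono) auto
  ultimately show "relaxed_surplus x \<theta> \<le> relaxed_surplus z \<theta>"
    unfolding relaxed_surplus_def by linarith
qed

text \<open>For \<open>s\<close> below the floor, exactly \<open>\<lfloor>n s / qh\<rfloor>\<close> of the roundings \<open>k = 1, \<dots>, n\<close> equal \<open>qh\<close>
  and the others vanish, so their average is within \<open>qh / n\<close> of \<open>s\<close>; since the envelope is linear
  below the floor, averaging the rounded schedules loses little relaxed surplus.\<close>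

definition quantize :: "nat \<Rightarrow> nat \<Rightarrow> real \<Rightarrow> real" where
  "quantize n k s = (if qh \<le> s then s else if k \<le> nat \<lfloor>real n * s / qh\<rfloor> then qh else 0)"

lemma quantize_mono: "0 \<le> s1 \<Longrightarrow> s1 \<le> s2 \<Longrightarrow> quantize n k s1 \<le> quantize n k s2"
proof -
  assume s: "0 \<le> s1" "s1 \<le> s2"
  have "\<lfloor>real n * s1 / qh\<rfloor> \<le> \<lfloor>real n * s2 / qh\<rfloor>"
    using s quantity_floor(1) by (intro floor_mono divide_right_mono mult_left_mono) auto
  then show ?thesis
    unfolding quantize_def using s quantity_floor(1) by auto
qed

lemma quantize_floored:
  assumes "schedule z" "\<And>\<theta>. \<theta> \<in> Th \<Longrightarrow> z \<theta> \<le> qe \<theta>"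
  shows "floored_schedule (\<lambda>\<theta>. quantize n k (z \<theta>))"
proof -
  have "antimono_on Th (\<lambda>\<theta>. quantize n k (z \<theta>))"
    using assms(1) quantize_mono unfolding schedule_def monotone_on_def by blast
  moreover have "quantize n k (z \<theta>) = 0 \<or> qh \<le> quantize n k (z \<theta>) \<and> quantize n k (z \<theta>) \<le> qe \<theta>"
    if "\<theta> \<in> Th" for \<theta>
    using assms that quantity_floor_less_q_eff[OF that] unfolding quantize_def by auto
  ultimately show ?thesis unfolding floored_schedule_def by blast
qed

lemma sum_quantize:
  assumes "0 \<le> s" "s < qh" "0 < n"
  shows "real n * s - qh \<le> (\<Sum>k=1..n. quantize n k s)" "(\<Sum>k=1..n. quantize n k s) \<le> real n * s"
proof -
  define y where "y = real n * s / qh"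
  define j where "j = nat \<lfloor>y\<rfloor>"
  have "0 \<le> y" "y < real n" "y * qh = real n * s"
    unfolding y_def using assms quantity_floor(1) by (auto simp: divide_less_eq)
  then have j: "real j \<le> y" "y < real j + 1" "j \<le> n"
    unfolding j_def by linarith+
  have "(\<Sum>k=1..n. quantize n k s) = (\<Sum>k\<in>{k\<in>{1..n}. k \<le> j}. qh)"
    unfolding sum.inter_filter[OF finite_atLeastAtMost]
    by (rule sum.cong) (use assms in \<open>auto simp: quantize_def j_def y_def\<close>)
  also have "{k\<in>{1..n}. k \<le> j} = {1..j}" using j by auto
  finally have sum: "(\<Sum>k=1..n. quantize n k s) = real j * qh" by simp
  have "(y - 1) * qh \<le> real j * qh" "real j * qh \<le> y * qh"
    using j quantity_floor(1) by (auto intro: mult_right_mono)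
  then show "real n * s - qh \<le> (\<Sum>k=1..n. quantize n k s)" "(\<Sum>k=1..n. quantize n k s) \<le> real n * s"
    using sum \<open>y * qh = real n * s\<close> by (simp_all add: algebra_simps)
qed

lemma sum_quantized_net_surplus:
  assumes "0 \<le> s" "0 < n" "\<theta> \<in> Th"
  shows "real n * (envelope s - \<theta> * s) - qh * (P qh + thi)
    \<le> (\<Sum>k=1..n. envelope (quantize n k s) - \<theta> * quantize n k s)"
proof (cases "qh \<le> s")
  case True
  moreover have "0 \<le> qh * (P qh + thi)"
    using quantity_floor(1) P_nonneg tlo_pos tlo_less_thi by simp
  ultimately show ?thesis by (simp add: quantize_def)
next
  case False
  have linear: "envelope t - \<theta> * t = t * (P qh - \<theta>)" if "t \<le> qh" for t
    using envelope_below_floor[OF that] by (simp add: algebra_simps)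
  define S where "S = (\<Sum>k=1..n. quantize n k s)"
  have "quantize n k s \<le> qh" for k
    using False quantity_floor(1) by (simp add: quantize_def)
  then have sum: "(\<Sum>k=1..n. envelope (quantize n k s) - \<theta> * quantize n k s) = S * (P qh - \<theta>)"
    unfolding S_def by (simp add: linear sum_distrib_right)
  have S: "0 \<le> real n * s - S" "real n * s - S \<le> qh"
    using sum_quantize[OF \<open>0 \<le> s\<close> _ \<open>0 < n\<close>] False unfolding S_def by auto
  have "0 \<le> P qh" using P_nonneg quantity_floor(1) by simp
  have "(real n * s - S) * (P qh - \<theta>) \<le> (real n * s - S) * (P qh + thi)"
    using S(1) \<open>\<theta> \<in> Th\<close> tlo_pos by (intro mult_left_mono) auto
  also have "\<dots> \<le> qh * (P qh + thi)"
    using S(2) \<open>0 \<le> P qh\<close> tlo_pos tlo_less_thi by (intro mult_right_mono) auto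
  finally have "(real n * s - S) * (P qh - \<theta>) \<le> qh * (P qh + thi)" .
  moreover have "real n * (envelope s - \<theta> * s) = real n * (s * (P qh - \<theta>))"
    using linear[of s] False by simp
  moreover have "real n * (s * (P qh - \<theta>)) = (real n * s - S) * (P qh - \<theta>) + S * (P qh - \<theta>)"
    by (simp add: algebra_simps)
  ultimately show ?thesis using sum by linarith
qed

lemma sum_quantized_rent:
  assumes z: "schedule z" "\<And>\<theta>. \<theta> \<in> Th \<Longrightarrow> z \<theta> \<le> qe \<theta>" and "0 < n" and \<theta>: "\<theta> \<in> Th"
  shows "(\<Sum>k=1..n. rent (\<lambda>t. quantize n k (z t)) \<theta>) \<le> real n * rent z \<theta>"
proof -
  define zk where "zk k t = quantize n k (z t)" for k t
  have zk: "schedule (zk k)" for k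
    unfolding zk_def using quantize_floored[OF z] by (rule floored_imp_schedule)
  have int: "f integrable_on {\<theta>..thi}" if "schedule f" for f
    using that \<theta> antimono_on_integrable[OF antimono_on_subinterval] unfolding schedule_def by auto
  have sum_le: "(\<Sum>k=1..n. zk k t) \<le> real n * z t" if "t \<in> {\<theta>..thi}" for t
  proof (cases "qh \<le> z t")
    case True
    then show ?thesis unfolding zk_def quantize_def by simp
  next
    case False
    moreover have "0 \<le> z t" using z(1) that \<theta> unfolding schedule_def by auto
    ultimately show ?thesis
      using sum_quantize(2)[of "z t" n] \<open>0 < n\<close> unfolding zk_def by simp
  qed
  have "(\<Sum>k=1..n. rent (zk k) \<theta>) = integral {\<theta>..thi} (\<lambda>t. \<Sum>k=1..n. zk k t)"
    unfolding rent_def by (rule integral_sum[symmetric]) (use int[OF zk] in auto)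
  also have "\<dots> \<le> integral {\<theta>..thi} (\<lambda>t. real n * z t)"
    using sum_le int[OF zk] int[OF z(1)]
    by (intro integral_le integrable_sum integrable_on_mult_right) auto
  also have "\<dots> = real n * rent z \<theta>"
    unfolding rent_def using integral_mult[OF int[OF z(1)], of "real n"] by simp
  finally show ?thesis unfolding zk_def .
qed

lemma sum_quantized_surplus:
  assumes z: "schedule z" "\<And>\<theta>. \<theta> \<in> Th \<Longrightarrow> z \<theta> \<le> qe \<theta>" and "0 < n" and \<theta>: "\<theta> \<in> Th"
  shows "real n * relaxed_surplus z \<theta>
    \<le> (\<Sum>k=1..n. relaxed_surplus (\<lambda>t. quantize n k (z t)) \<theta>) + qh * (P qh + thi)"
proof -
  have "0 \<le> z \<theta>" using z(1) \<theta> unfolding schedule_def by auto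
  have "(1 - \<alpha>) * (\<Sum>k=1..n. rent (\<lambda>t. quantize n k (z t)) \<theta>) \<le> (1 - \<alpha>) * (real n * rent z \<theta>)"
    using sum_quantized_rent[OF z \<open>0 < n\<close> \<theta>] alpha_less_1 by (intro mult_left_mono) auto
  moreover have "(\<Sum>k=1..n. relaxed_surplus (\<lambda>t. quantize n k (z t)) \<theta>)
    = (\<Sum>k=1..n. envelope (quantize n k (z \<theta>)) - \<theta> * quantize n k (z \<theta>))
      - (1 - \<alpha>) * (\<Sum>k=1..n. rent (\<lambda>t. quantize n k (z t)) \<theta>)"
    unfolding relaxed_surplus_def by (simp add: sum_subtractf sum_distrib_left)
  moreover have "real n * relaxed_surplus z \<theta>
    = real n * (envelope (z \<theta>) - \<theta> * z \<theta>) - (1 - \<alpha>) * (real n * rent z \<theta>)"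
    unfolding relaxed_surplus_def by (simp add: algebra_simps)
  ultimately show ?thesis
    using sum_quantized_net_surplus[OF \<open>0 \<le> z \<theta>\<close> \<open>0 < n\<close> \<theta>] by linarith
qed

lemma relaxed_value_le_floored:
  assumes x: "schedule x" and opt: "\<And>y. floored_schedule y \<Longrightarrow> relaxed_value y \<le> v"
  shows "relaxed_value x \<le> v"
proof -
  interpret prob_space G_Th by (rule prob_space_G_Th)
  define z where "z \<theta> = min (x \<theta>) (qe \<theta>)" for \<theta>
  have z: "schedule z" "\<And>\<theta>. \<theta> \<in> Th \<Longrightarrow> z \<theta> \<le> qe \<theta>"
    and "relaxed_value x \<le> relaxed_value z"
    using capped_schedule[OF x] relaxed_value_mono[OF x] unfolding z_def by auto
  moreover have "relaxed_value z \<le> v"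
  proof (rule le_of_le_plus_divide_nat)
    show "0 \<le> qh * (P qh + thi)" using quantity_floor(1) P_nonneg tlo_pos tlo_less_thi by simp
    fix n :: nat assume "0 < n"
    define zk where "zk k t = quantize n k (z t)" for k t
    have zk: "floored_schedule (zk k)" for k
      unfolding zk_def using quantize_floored[OF z] .
    have "real n * relaxed_value z = (\<integral>\<theta>. real n * relaxed_surplus z \<theta> \<partial>G_Th)"
      unfolding relaxed_value_def by simp
    also have "\<dots> \<le> (\<integral>\<theta>. (\<Sum>k=1..n. relaxed_surplus (zk k) \<theta>) + qh * (P qh + thi) \<partial>G_Th)"
      using sum_quantized_surplus[OF z \<open>0 < n\<close>] integrable_relaxed_surplus floored_imp_schedule[OF zk]
        z(1) sets_G unfolding zk_def
      by (intro integral_mono) (auto simp: space_restrict_space)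
    also have "\<dots> = (\<Sum>k=1..n. relaxed_value (zk k)) + qh * (P qh + thi)"
      using integrable_relaxed_surplus[OF floored_imp_schedule[OF zk]] prob_space
      unfolding relaxed_value_def by (simp add: Bochner_Integration.integral_sum)
    also have "\<dots> \<le> real n * v + qh * (P qh + thi)"
      using sum_mono[of "{1..n}" "\<lambda>k. relaxed_value (zk k)" "\<lambda>_. v"] opt[OF zk] by simp
    finally show "relaxed_value z \<le> v + qh * (P qh + thi) / real n"
      using \<open>0 < n\<close> by (simp add: field_simps)
  qed
  ultimately show ?thesis by linarith
qed

section \<open>An optimal floored schedule\<close>

lemma floored_schedule_limit:
  assumes xs: "\<And>m. floored_schedule (xs m)" and lim: "\<And>\<theta>. \<theta> \<in> Th \<Longrightarrow> (\<lambda>m. xs m \<theta>) \<longlonglongrightarrow> x \<theta>"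
  shows "floored_schedule x"
proof -
  have "x b \<le> x a" if "a \<in> Th" "b \<in> Th" "a \<le> b" for a b
    using xs that unfolding floored_schedule_def monotone_on_def by (intro LIMSEQ_le[OF lim lim]) auto
  then have "antimono_on Th x"
    by (intro monotone_onI)
  moreover have "x \<theta> \<in> {0} \<union> {qh..qe \<theta>}" if "\<theta> \<in> Th" for \<theta>
  proof (rule closed_sequentially[OF _ _ lim[OF that]])
    show "closed ({0} \<union> {qh..qe \<theta>})" by (intro closed_Un) auto
    show "xs m \<theta> \<in> {0} \<union> {qh..qe \<theta>}" for m
      using xs that unfolding floored_schedule_def by auto
  qed
  ultimately show ?thesis unfolding floored_schedule_def by auto
qed

lemma relaxed_surplus_tendsto:
  assumes xs: "\<And>m. schedule (xs m)" and \<theta>: "\<theta> \<in> Th"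
    and lim: "\<And>t. t \<in> Th \<Longrightarrow> (\<lambda>m. xs m t) \<longlonglongrightarrow> x t"
  shows "(\<lambda>m. relaxed_surplus (xs m) \<theta>) \<longlonglongrightarrow> relaxed_surplus x \<theta>"
proof -
  have "(\<lambda>m. envelope (xs m \<theta>)) \<longlonglongrightarrow> envelope (x \<theta>)"
    using isCont_tendsto_compose[OF isCont_envelope lim[OF \<theta>]] .
  moreover have "(\<lambda>m. rent (xs m) \<theta>) \<longlonglongrightarrow> rent x \<theta>"
    unfolding rent_def
  proof (rule dominated_convergence(2)[where h="\<lambda>_. qbar"])
    show "xs m integrable_on {\<theta>..thi}" for m
      using xs[of m] \<theta> antimono_on_integrable[OF antimono_on_subinterval] unfolding schedule_def by auto
    show "norm (xs m t) \<le> qbar" if "t \<in> {\<theta>..thi}" for m t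
      using xs[of m] that \<theta> unfolding schedule_def by auto
    show "(\<lambda>m. xs m t) \<longlonglongrightarrow> x t" if "t \<in> {\<theta>..thi}" for t
      using lim that \<theta> by simp
  qed (rule integrable_continuous_interval[OF continuous_on_const])
  ultimately show ?thesis
    unfolding relaxed_surplus_def using lim \<theta> by (intro tendsto_intros) auto
qed

lemma relaxed_value_tendsto:
  assumes xs: "\<And>m. schedule (xs m)" and x: "schedule x"
    and lim: "\<And>\<theta>. \<theta> \<in> Th \<Longrightarrow> (\<lambda>m. xs m \<theta>) \<longlonglongrightarrow> x \<theta>"
  shows "(\<lambda>m. relaxed_value (xs m)) \<longlonglongrightarrow> relaxed_value x"
proof -
  interpret prob_space G_Th by (rule prob_space_G_Th)
  obtain K where K: "\<And>x \<theta>. schedule x \<Longrightarrow> \<theta> \<in> Th \<Longrightarrow> \<bar>relaxed_surplus x \<theta>\<bar> \<le> K"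
    using relaxed_surplus_bounded by blast
  have space: "space G_Th = Th"
    using sets_G by (simp add: space_restrict_space)
  show ?thesis
    unfolding relaxed_value_def
  proof (rule integral_dominated_convergence[where w="\<lambda>_. K"])
    show "relaxed_surplus x \<in> borel_measurable G_Th" "relaxed_surplus (xs m) \<in> borel_measurable G_Th" for m
      using measurable_G_Th relaxed_surplus_measurable xs x by blast+
    show "AE \<theta> in G_Th. (\<lambda>m. relaxed_surplus (xs m) \<theta>) \<longlonglongrightarrow> relaxed_surplus x \<theta>"
      using relaxed_surplus_tendsto[OF xs _ lim] space by auto
    show "AE \<theta> in G_Th. norm (relaxed_surplus (xs m) \<theta>) \<le> K" for m
      using K xs space by auto
  qed simp
qed

lemma floored_maximizing_sequence:
  obtains v xs where "\<And>y. floored_schedule y \<Longrightarrow> relaxed_value y \<le> v"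
    and "\<And>m. floored_schedule (xs m)" and "(\<lambda>m. relaxed_value (xs m)) \<longlonglongrightarrow> v"
proof -
  define S where "S = relaxed_value ` {x. floored_schedule x}"
  have "floored_schedule (\<lambda>_. 0)"
    unfolding floored_schedule_def by (simp add: monotone_on_def)
  then have "S \<noteq> {}" unfolding S_def by auto
  moreover obtain B where "\<And>x. schedule x \<Longrightarrow> relaxed_value x \<le> B"
    using relaxed_value_bounded by blast
  then have "bdd_above S"
    using floored_imp_schedule unfolding S_def by (intro bdd_aboveI[of _ B]) auto
  ultimately have upper: "relaxed_value y \<le> Sup S" if "floored_schedule y" for y
    using that unfolding S_def by (auto intro: cSup_upper)
  have "\<exists>x. floored_schedule x \<and> Sup S - 1 / (real m + 1) < relaxed_value x" for m
    using less_cSup_iff[OF \<open>S \<noteq> {}\<close> \<open>bdd_above S\<close>, of "Sup S - 1 / (real m + 1)"]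
    unfolding S_def by auto
  then obtain xs where xs: "\<And>m. floored_schedule (xs m)"
    and near: "\<And>m. Sup S - 1 / (real m + 1) < relaxed_value (xs m)"
    by metis
  have "(\<lambda>m. relaxed_value (xs m)) \<longlonglongrightarrow> Sup S"
  proof (rule tendsto_sandwich[where f="\<lambda>m. Sup S - 1 / (real m + 1)" and h="\<lambda>_. Sup S"])
    show "\<forall>\<^sub>F m in sequentially. Sup S - 1 / (real m + 1) \<le> relaxed_value (xs m)"
      using near by (simp add: less_imp_le)
    show "\<forall>\<^sub>F m in sequentially. relaxed_value (xs m) \<le> Sup S"
      using upper xs by simp
    show "(\<lambda>m. Sup S - 1 / (real m + 1)) \<longlonglongrightarrow> Sup S"
      using tendsto_diff[OF tendsto_const LIMSEQ_inverse_real_of_nat_add[of 0]]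
      by (simp add: inverse_eq_divide add.commute)
  qed simp
  then show ?thesis using that upper xs by blast
qed

lemma floored_optimum_exists:
  obtains x where "floored_schedule x" and "\<And>y. floored_schedule y \<Longrightarrow> relaxed_value y \<le> relaxed_value x"
proof -
  obtain v xs where upper: "\<And>y. floored_schedule y \<Longrightarrow> relaxed_value y \<le> v"
    and xs: "\<And>m. floored_schedule (xs m)" and xs_v: "(\<lambda>m. relaxed_value (xs m)) \<longlonglongrightarrow> v"
    using floored_maximizing_sequence by blast
  have "antimono_on Th (xs m)" "\<And>\<theta>. \<theta> \<in> Th \<Longrightarrow> \<bar>xs m \<theta>\<bar> \<le> qbar" for m
    using floored_imp_schedule[OF xs] unfolding schedule_def by auto
  then obtain d where d: "strict_mono d" and conv: "\<And>\<theta>. \<theta> \<in> Th \<Longrightarrow> convergent (\<lambda>m. xs (d m) \<theta>)"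
    using antimono_on_bounded_sequence_convergent_subseq[of tlo thi xs qbar] tlo_less_thi by auto
  define x where "x \<theta> = lim (\<lambda>m. xs (d m) \<theta>)" for \<theta>
  have lim: "(\<lambda>m. xs (d m) \<theta>) \<longlonglongrightarrow> x \<theta>" if "\<theta> \<in> Th" for \<theta>
    using conv[OF that] unfolding x_def by (simp add: convergent_LIMSEQ_iff)
  have x: "floored_schedule x"
    using floored_schedule_limit[of "\<lambda>m. xs (d m)", OF xs lim] .
  have "(\<lambda>m. relaxed_value (xs (d m))) \<longlonglongrightarrow> relaxed_value x"
    using relaxed_value_tendsto[of "\<lambda>m. xs (d m)", OF floored_imp_schedule[OF xs]
        floored_imp_schedule[OF x] lim] .
  moreover have "(\<lambda>m. relaxed_value (xs (d m))) \<longlonglongrightarrow> v"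
    using LIMSEQ_subseq_LIMSEQ[OF xs_v d] by (simp add: comp_def)
  ultimately have "relaxed_value x = v"
    by (rule LIMSEQ_unique)
  then show ?thesis using that x upper by auto
qed

lemma floored_schedule_efficient_at_tlo:
  assumes x: "floored_schedule x"
  defines "y \<equiv> x(tlo := qe tlo)"
  shows "floored_schedule y" and "relaxed_value x \<le> relaxed_value y"
proof -
  have tlo: "tlo \<in> Th" using tlo_less_thi by simp
  have "y b \<le> y a" if "a \<in> Th" "b \<in> Th" "a \<le> b" for a b
  proof (cases "a = tlo")
    case True
    then show ?thesis
      using floored_schedule_le_q_eff[OF x that(2)] q_eff_Th(5)[OF that(2)] unfolding y_def by simp
  next
    case False
    then have "b \<noteq> tlo" using that by auto
    then show ?thesis
      using False x that unfolding y_def floored_schedule_def monotone_on_def by simp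
  qed
  then have "antimono_on Th y"
    by (intro monotone_onI)
  then show y: "floored_schedule y"
    using x quantity_floor_less_q_eff[OF tlo] unfolding floored_schedule_def y_def by auto
  have rent: "rent y \<theta> = rent x \<theta>" for \<theta>
    unfolding rent_def by (rule integral_spike[of "{tlo}"]) (simp_all add: y_def)
  have "relaxed_surplus x \<theta> \<le> relaxed_surplus y \<theta>" if "\<theta> \<in> Th" for \<theta>
  proof (cases "\<theta> = tlo")
    case True
    have "0 \<le> x tlo"
      using floored_imp_schedule[OF x] tlo unfolding schedule_def by blast
    then show ?thesis
      using envelope_net_le_q_eff[OF tlo, of "x tlo"] True
      unfolding relaxed_surplus_def rent unfolding y_def by simp
  next
    case False
    then show ?thesis unfolding relaxed_surplus_def rent unfolding y_def by simp
  qed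
  then show "relaxed_value x \<le> relaxed_value y"
    using relaxed_value_mono floored_imp_schedule x y by blast
qed

lemma optimal_floored_schedule:
  obtains y where "floored_schedule y" and "y tlo = qe tlo"
    and "\<And>z. floored_schedule z \<Longrightarrow> relaxed_value z \<le> relaxed_value y"
proof -
  obtain x where x: "floored_schedule x"
    and x_opt: "\<And>z. floored_schedule z \<Longrightarrow> relaxed_value z \<le> relaxed_value x"
    using floored_optimum_exists by blast
  have "floored_schedule (x(tlo := qe tlo))" "relaxed_value x \<le> relaxed_value (x(tlo := qe tlo))"
    using floored_schedule_efficient_at_tlo[OF x] by auto
  then show ?thesis
    using x_opt by (intro that[of "x(tlo := qe tlo)"]) (auto intro: order.trans)
qed

section \<open>The optimal mechanism\<close>

lemma floored_schedule_mechanism: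
  assumes y: "floored_schedule y"
  defines "r \<equiv> \<lambda>\<theta>. if y \<theta> = 0 then 0 else 1 :: real"
  shows "is_mechanism tlo thi qbar r y (rent y)" "is_IC tlo thi r y (rent y)" "is_IR tlo thi (rent y)"
    "deterministic tlo thi r"
proof -
  have sched: "schedule y" using y by (rule floored_imp_schedule)
  then have anti: "antimono_on Th y" and bounds: "\<And>\<theta>. \<theta> \<in> Th \<Longrightarrow> 0 \<le> y \<theta> \<and> y \<theta> \<le> qbar"
    unfolding schedule_def by auto
  have yr: "y \<theta> * r \<theta> = y \<theta>" for \<theta>
    unfolding r_def by simp
  show "is_mechanism tlo thi qbar r y (rent y)"
    unfolding is_mechanism_def r_def using bounds by auto
  show "deterministic tlo thi r"
    unfolding deterministic_def r_def by auto
  show "is_IR tlo thi (rent y)"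
    unfolding is_IR_def using rent_bounds(1)[OF sched] by blast
  have "rent y b + (b - a) * y b \<le> rent y a" if "a \<in> Th" "b \<in> Th" for a b
  proof (cases "a \<le> b")
    case True
    then show ?thesis
      using rent_split[OF anti, of a b] antimono_on_integral_bounds(1)[OF antimono_on_subinterval[OF anti]] that
      by auto
  next
    case False
    then show ?thesis
      using rent_split[OF anti, of b a] antimono_on_integral_bounds(2)[OF antimono_on_subinterval[OF anti]] that
      by (auto simp: algebra_simps)
  qed
  then show "is_IC tlo thi r y (rent y)"
    unfolding is_IC_def mult.assoc yr by blast
qed

lemma RS_exp_floored_mechanism:
  assumes y: "floored_schedule y"
  defines "r \<equiv> \<lambda>\<theta>. if y \<theta> = 0 then 0 else 1 :: real"
  shows "set_integrable G Th (RS P c \<alpha> r y (rent y))" "RS_exp P c \<alpha> tlo thi G r y (rent y) = relaxed_value y"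
proof -
  have RS_eq: "RS P c \<alpha> r y (rent y) \<theta> = relaxed_surplus y \<theta>" if "\<theta> \<in> space G_Th" for \<theta>
  proof (cases "y \<theta> = 0")
    case True
    then show ?thesis unfolding RS_def relaxed_surplus_def r_def by (simp add: envelope_0)
  next
    case False
    then have "qh \<le> y \<theta>"
      using y that sets_G unfolding floored_schedule_def by (auto simp: space_restrict_space)
    then show ?thesis
      using False envelope_above_floor unfolding RS_def relaxed_surplus_def r_def TS_def by simp
  qed
  have "integrable G_Th (RS P c \<alpha> r y (rent y)) \<longleftrightarrow> integrable G_Th (relaxed_surplus y)"
    by (rule Bochner_Integration.integrable_cong) (simp_all add: RS_eq)
  moreover have "integral\<^sup>L G_Th (RS P c \<alpha> r y (rent y)) = integral\<^sup>L G_Th (relaxed_surplus y)"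
    by (rule Bochner_Integration.integral_cong) (simp_all add: RS_eq)
  ultimately show "set_integrable G Th (RS P c \<alpha> r y (rent y))"
    "RS_exp P c \<alpha> tlo thi G r y (rent y) = relaxed_value y"
    using integrable_relaxed_surplus[OF floored_imp_schedule[OF y]]
    unfolding set_integral_G_Th RS_exp_def relaxed_value_def by simp_all
qed

lemma RS_exp_le_floored_bound:
  assumes mech: "is_mechanism tlo thi qbar r q u" and ic: "is_IC tlo thi r q u" and ir: "is_IR tlo thi u"
    and bound: "\<And>y. floored_schedule y \<Longrightarrow> relaxed_value y \<le> v"
  shows "RS_exp P c \<alpha> tlo thi G r q u \<le> v"
proof (cases "set_integrable G Th (RS P c \<alpha> r q u)")
  case True
  have x: "schedule (\<lambda>\<theta>. q \<theta> * r \<theta>)" by (rule IC_schedule[OF mech ic])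
  have "RS_exp P c \<alpha> tlo thi G r q u \<le> relaxed_value (\<lambda>\<theta>. q \<theta> * r \<theta>)"
    unfolding RS_exp_def set_integral_G_Th relaxed_value_def
    using True RS_le_relaxed_surplus[OF mech ic ir] integrable_relaxed_surplus[OF x] sets_G
    by (intro integral_mono) (auto simp: set_integral_G_Th space_restrict_space)
  also have "\<dots> \<le> v"
    using relaxed_value_le_floored[OF x bound] .
  finally show ?thesis .
next
  case False
  have "floored_schedule (\<lambda>_. 0)"
    unfolding floored_schedule_def by (simp add: monotone_on_def)
  moreover have "relaxed_value (\<lambda>_. 0) = 0"
    unfolding relaxed_value_def relaxed_surplus_def rent_def by (simp add: envelope_0)
  ultimately have "0 \<le> v" using bound by force
  moreover have "RS_exp P c \<alpha> tlo thi G r q u = 0"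
    using False unfolding RS_exp_def set_lebesgue_integral_def set_integrable_def
    by (simp add: not_integrable_integral_eq)
  ultimately show ?thesis by simp
qed

end

theorem corollary1:
  fixes P :: "real \<Rightarrow> real" and c \<alpha> tlo thi qbar :: real and G :: "real measure"
  assumes "0 < tlo" and "tlo < thi"
    and "c > 0"
    and "qbar > 0"
    and "continuous_on {0..} P"
    and "\<forall>x\<ge>0. P x \<ge> 0"
    and "\<forall>x y. 0 \<le> x \<and> x \<le> y \<longrightarrow> P y \<le> P x"
    and "\<forall>x y. 0 \<le> x \<and> x < y \<and> y \<le> qbar \<longrightarrow> P y < P x"
    and "P qbar = 0"
    and A2: "\<exists>q\<ge>0. P q = thi \<and> TS P c thi q > 0"
    and "0 \<le> \<alpha>" and "\<alpha> < 1"
    and "prob_space G" and "sets G = sets borel" and "measure G {tlo..thi} = 1"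
  shows "\<exists>r q u.
           is_mechanism tlo thi qbar r q u \<and> is_IC tlo thi r q u \<and> is_IR tlo thi u
           \<and> deterministic tlo thi r
           \<and> set_integrable G {tlo..thi} (RS P c \<alpha> r q u)
           \<and> (\<forall>r' q' u'. is_mechanism tlo thi qbar r' q' u' \<and> is_IC tlo thi r' q' u'
                \<and> is_IR tlo thi u' \<longrightarrow>
                RS_exp P c \<alpha> tlo thi G r' q' u' \<le> RS_exp P c \<alpha> tlo thi G r q u)
           \<and> DD P tlo thi q
           \<and> (\<forall>\<theta>\<in>{tlo..thi}. q \<theta> > 0 \<longrightarrow> q \<theta> \<ge> q_hat P c)"
proof -
  interpret regulation P qbar c \<alpha> tlo thi G
    by (intro regulation.intro demand.intro regulation_axioms.intro) (fact assms)+
  obtain y where y: "floored_schedule y" and y_tlo: "y tlo = qe tlo"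
    and y_opt: "\<And>z. floored_schedule z \<Longrightarrow> relaxed_value z \<le> relaxed_value y"
    using optimal_floored_schedule by blast
  define r where "r \<theta> = (if y \<theta> = 0 then 0 else 1 :: real)" for \<theta>
  note mechanism = floored_schedule_mechanism[OF y, folded r_def]
  note RS_y = RS_exp_floored_mechanism[OF y, folded r_def]
  have opt: "\<forall>r' q' u'. is_mechanism tlo thi qbar r' q' u' \<and> is_IC tlo thi r' q' u'
      \<and> is_IR tlo thi u' \<longrightarrow> RS_exp P c \<alpha> tlo thi G r' q' u' \<le> RS_exp P c \<alpha> tlo thi G r y (rent y)"
    using RS_exp_le_floored_bound[OF _ _ _ y_opt] RS_y(2) by simp
  have DD: "DD P tlo thi y"
    using floored_schedule_le_q_eff[OF y] y_tlo unfolding DD_def by simp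
  have floor: "\<forall>\<theta>\<in>Th. 0 < y \<theta> \<longrightarrow> qh \<le> y \<theta>"
    using y unfolding floored_schedule_def by force
  show ?thesis
    by (intro exI[of _ r] exI[of _ y] exI[of _ "rent y"] conjI) (fact mechanism RS_y(1) opt DD floor)+
qed
end
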